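(* Let $\mathcal U$ be a finite set, $R_0,\dots,R_{k-1}$ be $n$-place relations on $\mathcal U$, and let $R$ be an $n$-place relation on $\mathcal U$ which is a Boolean combination of $R_0,\dots,R_{k-1}$. Then $\lambda'_0(R)\le\sum_{\ell<k}\lambda'_0(R_\ell)$, and hence $\lambda_0(R)\le\sum_{\ell<k}\lambda_0(R_\ell)$.
   Context: For $A\subseteq\mathcal U$ and $n$-tuples $\bar b=\langle b_i\rangle,\bar c=\langle c_i\rangle$ from $\mathcal U$, $\bar b\approx_A\bar c$ means: $b_i\in A\iff c_i\in A$; $b_i\in A\Rightarrow b_i=c_i$; and $b_i=b_j\iff c_i=c_j$. For an $n$-place relation $S$ on $\mathcal U$, $\lambda'_0(S)$ is the least $|A|$ over $A\subseteq\mathcal U$ such that for all $n$-tuples $\bar b,\bar c$ from $\mathcal U$, $\bar b\approx_A\bar c$ implies ($S(\bar b)\iff S(\bar c)$); and $\lambda_0(S)=\min\{\lfloor|\mathcal U|/2\rfloor,\lambda'_0(S)\}$. *)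

theory Defs
  imports Main
begin

(* n-tuples from U are lists of length n with entries in U;
   an n-place relation on U is a predicate on such lists *)
definition tuples :: "'a set \<Rightarrow> nat \<Rightarrow> 'a list set" where
  "tuples U n = {b. length b = n \<and> set b \<subseteq> U}"

definition approx_on :: "'a set \<Rightarrow> 'a list \<Rightarrow> 'a list \<Rightarrow> bool" where
  "approx_on A b c \<longleftrightarrow> length b = length c \<and>
     (\<forall>i < length b. (b!i \<in> A \<longleftrightarrow> c!i \<in> A) \<and> (b!i \<in> A \<longrightarrow> b!i = c!i) \<and>
        (\<forall>j < length b. b!i = b!j \<longleftrightarrow> c!i = c!j))"

definition supports :: "'a set \<Rightarrow> nat \<Rightarrow> ('a list \<Rightarrow> bool) \<Rightarrow> 'a set \<Rightarrow> bool" where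
  "supports U n S A \<longleftrightarrow> (\<forall>b \<in> tuples U n. \<forall>c \<in> tuples U n.
       approx_on A b c \<longrightarrow> (S b \<longleftrightarrow> S c))"

definition lambda0' :: "'a set \<Rightarrow> nat \<Rightarrow> ('a list \<Rightarrow> bool) \<Rightarrow> nat" where
  "lambda0' U n S = (LEAST m. \<exists>A. A \<subseteq> U \<and> card A = m \<and> supports U n S A)"

definition lambda0 :: "'a set \<Rightarrow> nat \<Rightarrow> ('a list \<Rightarrow> bool) \<Rightarrow> nat" where
  "lambda0 U n S = min (card U div 2) (lambda0' U n S)"

definition bool_comb :: "'a set \<Rightarrow> nat \<Rightarrow> nat \<Rightarrow> (nat \<Rightarrow> 'a list \<Rightarrow> bool) \<Rightarrow> ('a list \<Rightarrow> bool) \<Rightarrow> bool" where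
  "bool_comb U n k Rs R \<longleftrightarrow> (\<exists>f :: bool list \<Rightarrow> bool.
      \<forall>b \<in> tuples U n. R b \<longleftrightarrow> f (map (\<lambda>l. Rs l b) [0..<k]))"

end

theory Submission
  imports Defs
begin

(* Since approx_on B refines approx_on A for A \<subseteq> B, a Boolean combination of the R_l
   is supported by the union of supports A_l of the R_l; choosing the A_l of minimal size
   gives subadditivity of lambda0'.  Capping at card U div 2 preserves it, as min h is
   monotone and subadditive. *)

lemma approx_on_antimono:
  assumes "approx_on B b c" and "A \<subseteq> B"
  shows "approx_on A b c"
  using assms unfolding approx_on_def by (metis subsetD)

lemma approx_on_carrier_eq:
  assumes "b \<in> tuples U n" and "approx_on U b c"
  shows "b = c"
proof (rule nth_equalityI)
  show "length b = length c" using assms(2) by (simp add: approx_on_def)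
  fix i assume i: "i < length b"
  have "set b \<subseteq> U" using assms(1) by (simp add: tuples_def)
  with i have "b!i \<in> U" by (meson nth_mem subsetD)
  then show "b!i = c!i" using i assms(2) unfolding approx_on_def by blast
qed

lemma supports_carrier: "supports U n S U"
  using approx_on_carrier_eq unfolding supports_def by blast

lemma lambda0'_attained: "\<exists>A. A \<subseteq> U \<and> card A = lambda0' U n S \<and> supports U n S A"
  unfolding lambda0'_def by (rule LeastI[where k = "card U"]) (use supports_carrier in blast)

lemma lambda0'_le_card:
  assumes "A \<subseteq> U" and "supports U n S A"
  shows "lambda0' U n S \<le> card A"
  unfolding lambda0'_def using assms by (intro Least_le) blast

lemma supports_bool_comb:
  assumes "bool_comb U n k Rs R" and "\<And>l. l < k \<Longrightarrow> supports U n (Rs l) (A l)"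
  shows "supports U n R (\<Union>l<k. A l)"
  unfolding supports_def
proof (intro ballI impI)
  fix b c assume b: "b \<in> tuples U n" and c: "c \<in> tuples U n"
    and bc: "approx_on (\<Union>l<k. A l) b c"
  obtain f where f: "\<forall>b \<in> tuples U n. R b \<longleftrightarrow> f (map (\<lambda>l. Rs l b) [0..<k])"
    using assms(1) unfolding bool_comb_def by blast
  have "Rs l b = Rs l c" if "l < k" for l
  proof -
    have "approx_on (A l) b c" by (rule approx_on_antimono[OF bc]) (use that in blast)
    then show ?thesis using assms(2)[OF that] b c unfolding supports_def by blast
  qed
  then have "map (\<lambda>l. Rs l b) [0..<k] = map (\<lambda>l. Rs l c) [0..<k]" by simp
  with f b c show "R b = R c" by metis
qed

lemma lambda0'_bool_comb_le:
  assumes "bool_comb U n k Rs R"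
  shows "lambda0' U n R \<le> (\<Sum>l<k. lambda0' U n (Rs l))"
proof -
  obtain A where A: "\<And>l. A l \<subseteq> U" "\<And>l. card (A l) = lambda0' U n (Rs l)"
    "\<And>l. supports U n (Rs l) (A l)"
    using lambda0'_attained[of U n "Rs _"] by metis
  have "lambda0' U n R \<le> card (\<Union>l<k. A l)"
    using A(1,3) by (intro lambda0'_le_card supports_bool_comb[OF assms]) auto
  also have "\<dots> \<le> (\<Sum>l<k. card (A l))" by (rule card_UN_le) simp
  finally show ?thesis by (simp add: A(2))
qed

lemma min_le_sum_min:
  fixes g :: "'i \<Rightarrow> nat"
  assumes "finite K" and "x \<le> sum g K"
  shows "min h x \<le> (\<Sum>l\<in>K. min h (g l))"
proof (cases "\<exists>l\<in>K. h \<le> g l")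
  case True
  then obtain l where "l \<in> K" "h \<le> g l" by blast
  then have "min h (g l) \<le> (\<Sum>l\<in>K. min h (g l))"
    using assms(1) by (intro member_le_sum) auto
  then show ?thesis using \<open>h \<le> g l\<close> by simp
next
  case False
  then have "(\<Sum>l\<in>K. min h (g l)) = sum g K" by (intro sum.cong) auto
  then show ?thesis using assms(2) by simp
qed

theorem claim2p6:
  fixes U :: "'a set" and n k :: nat and Rs :: "nat \<Rightarrow> 'a list \<Rightarrow> bool" and R :: "'a list \<Rightarrow> bool"
  assumes "finite U"
    and "bool_comb U n k Rs R"
  shows "lambda0' U n R \<le> (\<Sum>l<k. lambda0' U n (Rs l))
     \<and> lambda0 U n R \<le> (\<Sum>l<k. lambda0 U n (Rs l))"
proof
  show *: "lambda0' U n R \<le> (\<Sum>l<k. lambda0' U n (Rs l))"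
    using assms(2) by (rule lambda0'_bool_comb_le)
  show "lambda0 U n R \<le> (\<Sum>l<k. lambda0 U n (Rs l))"
    unfolding lambda0_def using * by (intro min_le_sum_min) auto
qed

end
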